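(* Let $L$ be a language, $\downarrow_1,\downarrow_2$ compilers from $L$ to $L$, $\sim_1,\sim_2\subseteq\mathrm{Tr}_L\times\mathrm{Tr}_L$ trace relations and $C_1,C_2$ classes of $L$-properties. Assume $\mathrm{RTP}^{\sigma}(\downarrow_1,C_1,\sim_1)$ and $\mathrm{RTP}^{\sigma}(\downarrow_2,C_2,\sim_2)$; that $\sim_1$ is well-formed for $C_2$ and $\sim_2$ is well-formed for $C_1$; and that $\tilde\sigma_{\sim_2}(C_1)=C_1$ and $\tilde\sigma_{\sim_1}(C_2)=C_2$. Then $\mathrm{RTP}^{\sigma}(p\mapsto\downarrow_2(\downarrow_1(p)),\ C_1\cap C_2,\ \sim_1\bullet\sim_2)$ and $\mathrm{RTP}^{\sigma}(p\mapsto\downarrow_1(\downarrow_2(p)),\ C_2\cap C_1,\ \sim_2\bullet\sim_1)$.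
   Context: A language $L$ consists of: a set of partial programs (components), a set of contexts, a set of whole programs, a partial linking operation $\mathrm{link}(c,p)$ producing a whole program from a context $c$ and a component $p$, a set $\mathrm{Tr}_L$ of traces, and an execution relation $W\Downarrow t$ meaning that whole program $W$ terminates producing trace $t$. A property is a set $\pi\subseteq\mathrm{Tr}_L$; a class is a set of properties. $W\models\pi$ iff every $t$ with $W\Downarrow t$ lies in $\pi$. $p\models_R\pi$ iff for every context $c$ and whole program $W$ with $\mathrm{link}(c,p)=W$, $W\models\pi$. A compiler from $L_S$ to $L_T$ is a function from $L_S$-components to $L_T$-components. For $\sim\subseteq\mathrm{Tr}_S\times\mathrm{Tr}_T$, $\sigma_\sim(\pi_T)=\{t_S\mid\forall t_T,\ t_S\sim t_T\Rightarrow t_T\in\pi_T\}$ and $\tilde\sigma_\sim(C_T)=\{\sigma_\sim(\pi)\mid\pi\in C_T\}$. $\mathrm{RTP}^{\sigma}(\downarrow,C_T,\sim)$ holds iff for every $\pi_T\in C_T$ and every $L_S$-component $p$, if $p\models_R\sigma_\sim(\pi_T)$ then $\downarrow(p)\models_R\pi_T$. A relation $\sim$ is well-formed for $C_T$ iff for all $\pi_T\in C_T$, $\sigma_\sim(\pi_T)\in\tilde\sigma_\sim(C_T)$. $t\,(\sim_1\bullet\sim_2)\,t''$ iff there exists $t'$ with $t\sim_1 t'$ and $t'\sim_2 t''$. *)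

theory Defs
  imports Main
begin

text \<open>A language is given by a partial linking operation
  link :: context => component => whole option
  and an execution relation exec :: whole => trace => bool
  (exec W t means W terminates producing trace t).  Traces Tr_L are all
  elements of the trace type; properties are sets of traces.\<close>

definition wsat :: "('w \<Rightarrow> 't \<Rightarrow> bool) \<Rightarrow> 'w \<Rightarrow> 't set \<Rightarrow> bool" where
  "wsat exec W \<pi> \<longleftrightarrow> (\<forall>t. exec W t \<longrightarrow> t \<in> \<pi>)"

definition rsat :: "('c \<Rightarrow> 'p \<Rightarrow> 'w option) \<Rightarrow> ('w \<Rightarrow> 't \<Rightarrow> bool) \<Rightarrow> 'p \<Rightarrow> 't set \<Rightarrow> bool" where
  "rsat link exec p \<pi> \<longleftrightarrow> (\<forall>c W. link c p = Some W \<longrightarrow> wsat exec W \<pi>)"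

definition sigma :: "('s \<Rightarrow> 't \<Rightarrow> bool) \<Rightarrow> 't set \<Rightarrow> 's set" where
  "sigma rel \<pi>T = {tS. \<forall>tT. rel tS tT \<longrightarrow> tT \<in> \<pi>T}"

definition sigma_tilde :: "('s \<Rightarrow> 't \<Rightarrow> bool) \<Rightarrow> 't set set \<Rightarrow> 's set set" where
  "sigma_tilde rel C = {sigma rel \<pi> | \<pi>. \<pi> \<in> C}"

definition RTP_sigma ::
  "('cS \<Rightarrow> 'pS \<Rightarrow> 'wS option) \<Rightarrow> ('wS \<Rightarrow> 'tS \<Rightarrow> bool) \<Rightarrow>
   ('cT \<Rightarrow> 'pT \<Rightarrow> 'wT option) \<Rightarrow> ('wT \<Rightarrow> 'tT \<Rightarrow> bool) \<Rightarrow>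
   ('pS \<Rightarrow> 'pT) \<Rightarrow> 'tT set set \<Rightarrow> ('tS \<Rightarrow> 'tT \<Rightarrow> bool) \<Rightarrow> bool" where
  "RTP_sigma linkS execS linkT execT cmp CT rel \<longleftrightarrow>
     (\<forall>\<pi>T \<in> CT. \<forall>p. rsat linkS execS p (sigma rel \<pi>T) \<longrightarrow> rsat linkT execT (cmp p) \<pi>T)"

definition well_formed_for :: "('s \<Rightarrow> 't \<Rightarrow> bool) \<Rightarrow> 't set set \<Rightarrow> bool" where
  "well_formed_for rel CT \<longleftrightarrow> (\<forall>\<pi>T \<in> CT. sigma rel \<pi>T \<in> sigma_tilde rel CT)"

end

theory Submission
  imports Defs
begin

text \<open>Robust preservation composes: the second compiler preserves \<pi> as soon as the output
  of the first robustly satisfies sigma rel2 \<pi>, and the first compiler guarantees this when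
  sigma rel2 \<pi> lies in its class, because sigma (rel1 OO rel2) \<pi> = sigma rel1 (sigma rel2 \<pi>).
  Closure of each class under the other relation's sigma provides exactly that.\<close>

lemma sigma_relcompp: "sigma (r1 OO r2) \<pi> = sigma r1 (sigma r2 \<pi>)"
  unfolding sigma_def by blast

lemma sigma_mem_if_sigma_tilde_eq:
  assumes "sigma_tilde r C = C" and "\<pi> \<in> C"
  shows "sigma r \<pi> \<in> C"
  using assms unfolding sigma_tilde_def by blast

lemma RTP_sigma_comp:
  assumes RTP1: "RTP_sigma linkS execS linkM execM cmp1 C1 r1"
    and RTP2: "RTP_sigma linkM execM linkT execT cmp2 C2 r2"
    and closed: "\<And>\<pi>. \<pi> \<in> C \<Longrightarrow> sigma r2 \<pi> \<in> C1"
    and "C \<subseteq> C2"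
  shows "RTP_sigma linkS execS linkT execT (\<lambda>p. cmp2 (cmp1 p)) C (r1 OO r2)"
  unfolding RTP_sigma_def
proof (intro ballI allI impI)
  fix \<pi> p
  assume "\<pi> \<in> C" and "rsat linkS execS p (sigma (r1 OO r2) \<pi>)"
  then have "rsat linkM execM (cmp1 p) (sigma r2 \<pi>)"
    using RTP1 closed unfolding RTP_sigma_def sigma_relcompp by blast
  then show "rsat linkT execT (cmp2 (cmp1 p)) \<pi>"
    using RTP2 \<open>\<pi> \<in> C\<close> \<open>C \<subseteq> C2\<close> unfolding RTP_sigma_def by blast
qed

theorem corollary3p2:
  fixes link :: "'c \<Rightarrow> 'p \<Rightarrow> 'w option"
    and exec :: "'w \<Rightarrow> 't \<Rightarrow> bool"
    and comp1 comp2 :: "'p \<Rightarrow> 'p"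
    and rel1 rel2 :: "'t \<Rightarrow> 't \<Rightarrow> bool"
    and C1 C2 :: "'t set set"
  assumes "RTP_sigma link exec link exec comp1 C1 rel1"
    and "RTP_sigma link exec link exec comp2 C2 rel2"
    and "well_formed_for rel1 C2"
    and "well_formed_for rel2 C1"
    and "sigma_tilde rel2 C1 = C1"
    and "sigma_tilde rel1 C2 = C2"
  shows "RTP_sigma link exec link exec (\<lambda>p. comp2 (comp1 p)) (C1 \<inter> C2) (rel1 OO rel2)
       \<and> RTP_sigma link exec link exec (\<lambda>p. comp1 (comp2 p)) (C2 \<inter> C1) (rel2 OO rel1)"
proof
  show "RTP_sigma link exec link exec (\<lambda>p. comp2 (comp1 p)) (C1 \<inter> C2) (rel1 OO rel2)"
    using assms(1,2) sigma_mem_if_sigma_tilde_eq[OF assms(5)]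
    by (rule RTP_sigma_comp) auto
  show "RTP_sigma link exec link exec (\<lambda>p. comp1 (comp2 p)) (C2 \<inter> C1) (rel2 OO rel1)"
    using assms(2,1) sigma_mem_if_sigma_tilde_eq[OF assms(6)]
    by (rule RTP_sigma_comp) auto
qed

end
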